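(* Let $X$ be a real Hilbert space, $I$ a finite index set, and $(T_i)_{i\in I}$ a family of operators $X\to X$ such that each $T_i$ is averaged nonexpansive and boundedly linearly regular. Set $Z_i=\operatorname{Fix}T_i$ and suppose $Z=\bigcap_{i\in I}Z_i\neq\varnothing$ and that the family $(Z_i)_{i\in I}$ is boundedly linearly regular. Let $(\omega_{i,n})_{(i,n)\in I\times\mathbb N}$ satisfy $\omega_{i,n}\in[0,1]$ and $\sum_{i\in I}\omega_{i,n}=1$ for every $n\in\mathbb N$. Set $I_n=\{i\in I:\omega_{i,n}>0\}$ and suppose $\omega_+=\inf_{n\in\mathbb N}\min_{i\in I_n}\omega_{i,n}>0$. Suppose there is $p\in\{1,2,\dots\}$ such that $I_n\cup I_{n+1}\cup\cdots\cup I_{n+p-1}=I$ for all $n\in\mathbb N$. Let $x_0\in X$ and define $x_{n+1}=\sum_{i\in I}\omega_{i,n}T_ix_n$. Then $(x_n)_{n\in\mathbb N}$ converges linearly to some point of $Z$.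
   Context: $T\colon X\to X$ is averaged nonexpansive if $T=(1-\lambda)\mathrm{Id}+\lambda N$ for some $\lambda\in[0,1[$ and some nonexpansive $N\colon X\to X$. An operator $T$ with $\operatorname{Fix}T\neq\varnothing$ is boundedly linearly regular if for every $\rho>0$ there is $\kappa\ge0$ with $d_{\operatorname{Fix}T}(x)\le\kappa\|x-Tx\|$ for all $x$ with $\|x\|\le\rho$. A finite family $(C_i)_{i\in I}$ of closed convex sets with $C=\bigcap_i C_i\ne\varnothing$ is boundedly linearly regular if for every $\rho>0$ there is $\mu>0$ with $d_C(x)\le\mu\max_{i\in I}d_{C_i}(x)$ for all $\|x\|\le\rho$. Here $d_C$ denotes the distance function to $C$. A sequence $(x_n)$ converges linearly to $\bar x$ if there are $c\ge0$ and $q\in[0,1[$ with $\|x_n-\bar x\|\le cq^n$ for all $n$. *)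

theory Defs
  imports "HOL-Analysis.Analysis"
begin

definition nonexpansive :: "('a::real_normed_vector \<Rightarrow> 'a) \<Rightarrow> bool" where
  "nonexpansive N \<longleftrightarrow> (\<forall>x y. norm (N x - N y) \<le> norm (x - y))"

definition averaged_nonexpansive :: "('a::real_normed_vector \<Rightarrow> 'a) \<Rightarrow> bool" where
  "averaged_nonexpansive T \<longleftrightarrow>
     (\<exists>l::real. 0 \<le> l \<and> l < 1 \<and> (\<exists>N. nonexpansive N \<and> T = (\<lambda>x. (1 - l) *\<^sub>R x + l *\<^sub>R N x)))"

definition Fix :: "('a \<Rightarrow> 'a) \<Rightarrow> 'a set" where
  "Fix T = {x. T x = x}"

definition bdd_lin_reg_op :: "('a::real_normed_vector \<Rightarrow> 'a) \<Rightarrow> bool" where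
  "bdd_lin_reg_op T \<longleftrightarrow> Fix T \<noteq> {} \<and>
     (\<forall>\<rho>>0. \<exists>\<kappa>\<ge>0. \<forall>x. norm x \<le> \<rho> \<longrightarrow> infdist x (Fix T) \<le> \<kappa> * norm (x - T x))"

definition bdd_lin_reg_family :: "'i set \<Rightarrow> ('i \<Rightarrow> 'a::real_normed_vector set) \<Rightarrow> bool" where
  "bdd_lin_reg_family I C \<longleftrightarrow> finite I \<and> I \<noteq> {} \<and> (\<forall>i\<in>I. closed (C i) \<and> convex (C i)) \<and>
     (\<Inter>i\<in>I. C i) \<noteq> {} \<and>
     (\<forall>\<rho>>0. \<exists>\<mu>>0. \<forall>x. norm x \<le> \<rho> \<longrightarrow>
        infdist x (\<Inter>i\<in>I. C i) \<le> \<mu> * (MAX i\<in>I. infdist x (C i)))"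

definition converges_linearly :: "(nat \<Rightarrow> 'a::real_normed_vector) \<Rightarrow> 'a \<Rightarrow> bool" where
  "converges_linearly x xbar \<longleftrightarrow>
     (\<exists>c\<ge>0. \<exists>q::real. 0 \<le> q \<and> q < 1 \<and> (\<forall>n. norm (x n - xbar) \<le> c * q ^ n))"

end

theory Submission
  imports Defs
begin

(*
  1. Every averaged operator T is strongly quasi-nonexpansive:
     |T y - z|^2 + c |y - T y|^2 \<le> |y - z|^2 for all fixed points z, with some c > 0.
     By convexity of |.|^2 this inequality passes to convex combinations, so the iterates
     form a Fejer monotone sequence with respect to Z = \<Inter>i. Fix (T i), and the decrease of
     |x n - z|^2 over a window of p steps dominates the accumulated weighted residual W n.
  2. Abstractly, a Fejer monotone sequence whose distance to a closed set Z contracts by a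
     factor Q < 1 every p steps converges linearly to a point of Z.
  3. The cover condition, the lower bound on the positive weights and the bounded linear
     regularity of the operators and of the family (Fix (T i)) give
     d(x n, Z)^2 \<le> \<gamma> W n; combined with step 1 this is a p-step contraction of d(x n, Z).
*)

lemma infdist_geI:
  assumes "Z \<noteq> {}" "\<And>z. z \<in> Z \<Longrightarrow> a \<le> dist y z"
  shows "a \<le> infdist y Z"
  using assms unfolding infdist_notempty[OF assms(1)] by (auto intro: cINF_greatest)

lemma infdist_sq_geI:
  assumes "Z \<noteq> {}" "0 \<le> a" "\<And>z. z \<in> Z \<Longrightarrow> a \<le> (dist y z)^2"
  shows "a \<le> (infdist y Z)^2"
proof -
  have "sqrt a \<le> infdist y Z"
    by (rule infdist_geI[OF assms(1)]) (metis assms(3) real_le_lsqrt zero_le_dist)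
  then show ?thesis using assms(2)
    by (metis real_sqrt_le_iff real_sqrt_unique infdist_nonneg)
qed

lemma norm_convex_combination_sq:
  fixes a b :: "'a::real_inner"
  shows "(norm ((1 - l) *\<^sub>R a + l *\<^sub>R b))^2
           = (1 - l) * (norm a)^2 + l * (norm b)^2 - l * (1 - l) * (norm (a - b))^2"
  unfolding power2_norm_eq_inner
  by (simp add: inner_commute algebra_simps)

lemma convex_on_norm_sq: "convex_on UNIV (\<lambda>y::'a::real_inner. (norm y)^2)"
proof (rule convex_onI)
  fix t :: real and a b :: 'a
  assume "0 < t" "t < 1"
  then show "(norm ((1 - t) *\<^sub>R a + t *\<^sub>R b))^2 \<le> (1 - t) * (norm a)^2 + t * (norm b)^2"
    unfolding norm_convex_combination_sq by simp
qed simp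

lemma norm_sq_weighted_sum_le:
  fixes y :: "'i \<Rightarrow> 'a::real_inner"
  assumes "finite I" "\<And>i. i \<in> I \<Longrightarrow> 0 \<le> w i" "(\<Sum>i\<in>I. w i) = 1"
  shows "(norm (\<Sum>i\<in>I. w i *\<^sub>R y i))^2 \<le> (\<Sum>i\<in>I. w i * (norm (y i))^2)"
proof (rule convex_on_sum[OF assms(1) _ convex_on_norm_sq assms(3)])
  show "I \<noteq> {}" using assms(3) by auto
qed (use assms(2) in auto)

lemma weighted_sum_minus:
  fixes v :: "'i \<Rightarrow> 'a::real_vector"
  assumes "(\<Sum>i\<in>I. w i) = 1"
  shows "(\<Sum>i\<in>I. w i *\<^sub>R v i) - z = (\<Sum>i\<in>I. w i *\<^sub>R (v i - z))"
  using assms by (simp add: scaleR_diff_right sum_subtractf scaleR_sum_left[symmetric])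

section \<open>Strongly quasi-nonexpansive operators\<close>

definition strongly_quasi_nonexpansive :: "real \<Rightarrow> ('a::real_normed_vector \<Rightarrow> 'a) \<Rightarrow> bool" where
  "strongly_quasi_nonexpansive c T \<longleftrightarrow>
     (\<forall>y z. z \<in> Fix T \<longrightarrow> (norm (T y - z))^2 + c * (norm (y - T y))^2 \<le> (norm (y - z))^2)"

text \<open>An operator (1 - l) Id + l N with N nonexpansive is strongly quasi-nonexpansive
  with constant 1 - l.\<close>
lemma averaged_imp_strongly_quasi_nonexpansive:
  fixes T :: "'a::real_inner \<Rightarrow> 'a"
  assumes "averaged_nonexpansive T"
  shows "\<exists>c>0. strongly_quasi_nonexpansive c T"
proof -
  obtain l N where l: "0 \<le> l" "l < 1" and N: "nonexpansive N"
    and T: "T = (\<lambda>x. (1 - l) *\<^sub>R x + l *\<^sub>R N x)"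
    using assms unfolding averaged_nonexpansive_def by auto
  have "strongly_quasi_nonexpansive (1 - l) T"
    unfolding strongly_quasi_nonexpansive_def
  proof (intro allI impI)
    fix y z assume "z \<in> Fix T"
    then have Tz: "(1 - l) *\<^sub>R z + l *\<^sub>R N z = z" by (simp add: T Fix_def)
    have N_quasi: "l * (norm (N y - z))^2 \<le> l * (norm (y - z))^2"
    proof (cases "l = 0")
      case False
      from Tz have "l *\<^sub>R N z = l *\<^sub>R z" by (simp add: algebra_simps)
      with False have "N z = z" by simp
      then have "norm (N y - z) \<le> norm (y - z)" using N unfolding nonexpansive_def by metis
      then show ?thesis using l by (intro mult_left_mono power_mono) auto
    qed simp
    define r where "r = (y - z) - (N y - z)"
    have "T y - z = (1 - l) *\<^sub>R (y - z) + l *\<^sub>R (N y - z)" by (simp add: T algebra_simps)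
    then have "(norm (T y - z))^2
        = (1 - l) * (norm (y - z))^2 + l * (norm (N y - z))^2 - l * (1 - l) * (norm r)^2"
      unfolding r_def by (simp only: norm_convex_combination_sq)
    moreover have "y - T y = l *\<^sub>R r" by (simp add: T r_def algebra_simps)
    then have "(1 - l) * (norm (y - T y))^2 = (1 - l) * l^2 * (norm r)^2"
      using l by (simp add: power_mult_distrib)
    moreover have "(1 - l) * l^2 * (norm r)^2 \<le> l * (1 - l) * (norm r)^2"
      using l mult_left_mono[of l 1 l]
      by (intro mult_right_mono) (auto simp: power2_eq_square)
    ultimately show "(norm (T y - z))^2 + (1 - l) * (norm (y - T y))^2 \<le> (norm (y - z))^2"
      using N_quasi by (simp add: algebra_simps)
  qed
  then show ?thesis using l by (intro exI[of _ "1 - l"]) auto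
qed

lemma strongly_quasi_nonexpansive_mono:
  assumes "strongly_quasi_nonexpansive c T" "c' \<le> c"
  shows "strongly_quasi_nonexpansive c' T"
  unfolding strongly_quasi_nonexpansive_def
proof (intro allI impI)
  fix y z assume "z \<in> Fix T"
  then have "(norm (T y - z))^2 + c * (norm (y - T y))^2 \<le> (norm (y - z))^2"
    using assms(1) unfolding strongly_quasi_nonexpansive_def by blast
  moreover have "c' * (norm (y - T y))^2 \<le> c * (norm (y - T y))^2"
    using assms(2) by (intro mult_right_mono) auto
  ultimately show "(norm (T y - z))^2 + c' * (norm (y - T y))^2 \<le> (norm (y - z))^2"
    by linarith
qed

lemma common_strong_quasi_nonexpansiveness:
  assumes "finite I" "\<forall>i\<in>I. \<exists>c>0. strongly_quasi_nonexpansive c (T i)"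
  shows "\<exists>c>0. \<forall>i\<in>I. strongly_quasi_nonexpansive c (T i)"
proof -
  obtain cf where cf: "\<And>i. i \<in> I \<Longrightarrow> cf i > 0 \<and> strongly_quasi_nonexpansive (cf i) (T i)"
    using assms(2) by metis
  define c where "c = Min (insert 1 (cf ` I))"
  have "c > 0" using assms(1) cf by (simp add: c_def)
  moreover have "strongly_quasi_nonexpansive c (T i)" if "i \<in> I" for i
    using cf[OF that] that assms(1) by (auto simp: c_def intro: strongly_quasi_nonexpansive_mono)
  ultimately show ?thesis by blast
qed

lemma strongly_quasi_nonexpansive_convex_combination:
  fixes T :: "'i \<Rightarrow> 'a::real_inner \<Rightarrow> 'a"
  assumes "finite I" "\<And>i. i \<in> I \<Longrightarrow> 0 \<le> w i" "(\<Sum>i\<in>I. w i) = 1"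
    and "\<And>i. i \<in> I \<Longrightarrow> strongly_quasi_nonexpansive c (T i)" and "z \<in> (\<Inter>i\<in>I. Fix (T i))"
  shows "(norm ((\<Sum>i\<in>I. w i *\<^sub>R T i y) - z))^2 + c * (\<Sum>i\<in>I. w i * (norm (y - T i y))^2)
           \<le> (norm (y - z))^2"
proof -
  have "(norm ((\<Sum>i\<in>I. w i *\<^sub>R T i y) - z))^2 \<le> (\<Sum>i\<in>I. w i * (norm (T i y - z))^2)"
    unfolding weighted_sum_minus[OF assms(3)] by (rule norm_sq_weighted_sum_le[OF assms(1-3)])
  also have "\<dots> \<le> (\<Sum>i\<in>I. w i * ((norm (y - z))^2 - c * (norm (y - T i y))^2))"
  proof (intro sum_mono mult_left_mono)
    fix i assume "i \<in> I"
    then have "(norm (T i y - z))^2 + c * (norm (y - T i y))^2 \<le> (norm (y - z))^2"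
      using assms(4,5) unfolding strongly_quasi_nonexpansive_def by blast
    then show "(norm (T i y - z))^2 \<le> (norm (y - z))^2 - c * (norm (y - T i y))^2"
      by linarith
  qed (use assms(2) in auto)
  also have "\<dots> = (\<Sum>i\<in>I. w i * (norm (y - z))^2 - c * (w i * (norm (y - T i y))^2))"
    by (rule sum.cong) (simp_all add: right_diff_distrib)
  also have "\<dots> = (\<Sum>i\<in>I. w i) * (norm (y - z))^2 - c * (\<Sum>i\<in>I. w i * (norm (y - T i y))^2)"
    unfolding sum_subtractf sum_distrib_left sum_distrib_right ..
  finally show ?thesis using assms(3) by simp
qed

lemma convex_combination_step_le:
  fixes T :: "'i \<Rightarrow> 'a::real_inner \<Rightarrow> 'a"
  assumes "finite I" "\<And>i. i \<in> I \<Longrightarrow> 0 \<le> w i" "(\<Sum>i\<in>I. w i) = 1"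
  shows "(norm ((\<Sum>i\<in>I. w i *\<^sub>R T i y) - y))^2 \<le> (\<Sum>i\<in>I. w i * (norm (y - T i y))^2)"
  using norm_sq_weighted_sum_le[OF assms, of "\<lambda>i. T i y - y"]
  by (simp add: weighted_sum_minus[OF assms(3)] norm_minus_commute)

section \<open>Fejer monotone sequences with a periodic distance contraction\<close>

definition fejer_monotone :: "(nat \<Rightarrow> 'a::metric_space) \<Rightarrow> 'a set \<Rightarrow> bool" where
  "fejer_monotone x Z \<longleftrightarrow> (\<forall>z\<in>Z. \<forall>n. dist (x (Suc n)) z \<le> dist (x n) z)"

lemma fejer_monotoneD:
  assumes "fejer_monotone x Z" "z \<in> Z" "n \<le> m"
  shows "dist (x m) z \<le> dist (x n) z"
proof (rule lift_Suc_antimono_le[of "\<lambda>k. dist (x k) z", OF _ assms(3)])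
  show "dist (x (Suc k)) z \<le> dist (x k) z" for k
    using assms(1,2) unfolding fejer_monotone_def by blast
qed

lemma fejer_infdist_antimono:
  assumes "fejer_monotone x Z" "Z \<noteq> {}" "n \<le> m"
  shows "infdist (x m) Z \<le> infdist (x n) Z"
proof (rule infdist_geI[OF assms(2)])
  fix z assume "z \<in> Z"
  have "infdist (x m) Z \<le> dist (x m) z" by (rule infdist_le[OF \<open>z \<in> Z\<close>])
  also have "\<dots> \<le> dist (x n) z" by (rule fejer_monotoneD[OF assms(1) \<open>z \<in> Z\<close> assms(3)])
  finally show "infdist (x m) Z \<le> dist (x n) z" .
qed

lemma fejer_dist_le_infdist:
  assumes "fejer_monotone x Z" "Z \<noteq> {}" "n \<le> m"
  shows "dist (x m) (x n) \<le> 2 * infdist (x n) Z"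
proof -
  have "dist (x m) (x n) / 2 \<le> infdist (x n) Z"
  proof (rule infdist_geI[OF assms(2)])
    fix z assume "z \<in> Z"
    have "dist (x m) (x n) \<le> dist (x m) z + dist (x n) z" by (rule dist_triangle2)
    also have "dist (x m) z \<le> dist (x n) z" using fejer_monotoneD[OF assms(1) \<open>z \<in> Z\<close> assms(3)] .
    finally show "dist (x m) (x n) / 2 \<le> dist (x n) z" by simp
  qed
  then show ?thesis by simp
qed

lemma periodic_contraction_power_bound:
  fixes d :: "nat \<Rightarrow> real"
  assumes antimono: "\<And>n. d (Suc n) \<le> d n" and "0 < p" "0 \<le> Q"
    and contraction: "\<And>n. d (n + p) \<le> Q * d n"
  shows "d n \<le> Q ^ (n div p) * d 0"
proof (induction n rule: less_induct)
  case (less n)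
  show ?case
  proof (cases "n < p")
    case True
    then show ?thesis using lift_Suc_antimono_le[of d 0 n] antimono by simp
  next
    case False
    then obtain m where m: "n = m + p" by (metis le_add_diff_inverse2 not_less)
    have "d n \<le> Q * d m" using contraction m by simp
    also have "\<dots> \<le> Q * (Q ^ (m div p) * d 0)"
      using less[of m] m \<open>0 < p\<close> \<open>0 \<le> Q\<close> by (simp add: mult_left_mono)
    also have "\<dots> = Q ^ (n div p) * d 0" using m \<open>0 < p\<close> by simp
    finally show ?thesis .
  qed
qed

text \<open>Such a sequence is dominated by a geometric sequence C q ^ n with q = Q ^ (1 / p).\<close>
lemma periodic_contraction_geometric:
  fixes d :: "nat \<Rightarrow> real"
  assumes nonneg: "\<And>n. 0 \<le> d n" and antimono: "\<And>n. d (Suc n) \<le> d n"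
    and "0 < p" "0 < Q" "Q < 1" and contraction: "\<And>n. d (n + p) \<le> Q * d n"
  shows "\<exists>C\<ge>0. \<exists>q. 0 \<le> q \<and> q < 1 \<and> (\<forall>n. d n \<le> C * q ^ n)"
proof -
  define q where "q = root p Q"
  have q: "0 < q" "q < 1" "q ^ p = Q" unfolding q_def using assms(3-5) by auto
  have "d n \<le> d 0 / Q * q ^ n" for n
  proof -
    have "p * Suc (n div p) = n div p * p + p" by simp
    then have "n \<le> p * Suc (n div p)"
      using div_mult_mod_eq[of n p] mod_less_divisor[OF \<open>0 < p\<close>, of n] by linarith
    then have "q ^ (p * Suc (n div p)) \<le> q ^ n"
      using q(1,2) by (intro power_decreasing) auto
    then have Q_le: "Q ^ (n div p) * Q \<le> q ^ n"
      by (simp only: power_mult q(3) power_Suc2)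
    have "d n \<le> Q ^ (n div p) * d 0"
      by (rule periodic_contraction_power_bound[where d = d and p = p and Q = Q and n = n,
            OF antimono \<open>0 < p\<close> less_imp_le[OF \<open>0 < Q\<close>] contraction])
    also have "\<dots> = d 0 / Q * (Q ^ (n div p) * Q)" using \<open>0 < Q\<close> by simp
    also have "\<dots> \<le> d 0 / Q * q ^ n"
      using Q_le nonneg[of 0] \<open>0 < Q\<close> by (intro mult_left_mono) auto
    finally show ?thesis .
  qed
  moreover have "0 \<le> d 0 / Q" using nonneg[of 0] \<open>0 < Q\<close> by simp
  ultimately show ?thesis using less_imp_le[OF q(1)] q(2) by blast
qed

lemma Cauchy_if_tail_bound:
  fixes x :: "nat \<Rightarrow> 'a::metric_space"
  assumes tail: "\<And>m n. n \<le> m \<Longrightarrow> dist (x m) (x n) \<le> b n" and "b \<longlonglongrightarrow> 0"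
  shows "Cauchy x"
proof (rule metric_CauchyI)
  fix e :: real assume "0 < e"
  then obtain N where N: "\<And>n. N \<le> n \<Longrightarrow> b n < e"
    using order_tendstoD(2)[OF assms(2)] by (auto simp: eventually_sequentially)
  have "dist (x m) (x n) < e" if "N \<le> m" "N \<le> n" for m n
  proof (cases "n \<le> m")
    case True
    then show ?thesis using tail[OF True] N[OF \<open>N \<le> n\<close>] by linarith
  next
    case False
    then have "dist (x n) (x m) \<le> b m" by (intro tail) simp
    then show ?thesis using N[OF \<open>N \<le> m\<close>] dist_commute[of "x m" "x n"] by linarith
  qed
  then show "\<exists>N. \<forall>m\<ge>N. \<forall>n\<ge>N. dist (x m) (x n) < e" by blast
qed

lemma fejer_linear_convergence:
  fixes x :: "nat \<Rightarrow> 'a::{real_normed_vector, complete_space}"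
  assumes fejer: "fejer_monotone x Z" and "closed Z" "Z \<noteq> {}"
    and rate: "\<And>n. infdist (x n) Z \<le> C * q ^ n" and "0 \<le> C" "0 \<le> q" "q < 1"
  shows "\<exists>z\<in>Z. converges_linearly x z"
proof -
  have rate_0: "(\<lambda>n. C * q ^ n) \<longlonglongrightarrow> 0"
    using assms(6,7) by (intro tendsto_mult_right_zero LIMSEQ_power_zero) auto
  have tail: "dist (x m) (x n) \<le> 2 * C * q ^ n" if "n \<le> m" for m n
    using fejer_dist_le_infdist[OF fejer \<open>Z \<noteq> {}\<close> that] rate[of n] by simp
  have tail_0: "(\<lambda>n. 2 * C * q ^ n) \<longlonglongrightarrow> 0"
    using assms(6,7) by (intro tendsto_mult_right_zero LIMSEQ_power_zero) auto
  have "Cauchy x" using tail tail_0 by (rule Cauchy_if_tail_bound)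
  then obtain z where z: "x \<longlonglongrightarrow> z" using Cauchy_convergent_iff convergent_def by blast
  have "norm (x n - z) \<le> 2 * C * q ^ n" for n
  proof -
    have "(\<lambda>m. dist (x m) (x n)) \<longlonglongrightarrow> dist z (x n)" using z by (intro tendsto_intros)
    moreover have "\<forall>m\<ge>n. dist (x m) (x n) \<le> 2 * C * q ^ n" using tail by blast
    ultimately have "dist z (x n) \<le> 2 * C * q ^ n" by (rule Lim_bounded)
    then show ?thesis by (simp add: dist_norm norm_minus_commute)
  qed
  moreover have "z \<in> Z"
  proof -
    have "(\<lambda>n. infdist (x n) Z) \<longlonglongrightarrow> infdist z Z" using z by (intro tendsto_intros)
    moreover have "(\<lambda>n. infdist (x n) Z) \<longlonglongrightarrow> 0"
      by (rule real_tendsto_sandwich[OF _ _ tendsto_const rate_0]) (simp_all add: infdist_nonneg rate)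
    ultimately have "infdist z Z = 0" by (rule LIMSEQ_unique)
    then show ?thesis using in_closed_iff_infdist_zero[OF \<open>closed Z\<close> \<open>Z \<noteq> {}\<close>] by simp
  qed
  ultimately show ?thesis unfolding converges_linearly_def using assms(5-7)
    by (intro bexI[of _ z] exI[of _ "2 * C"] exI[of _ q]) auto
qed

lemma fejer_periodic_contraction_linear_convergence:
  fixes x :: "nat \<Rightarrow> 'a::{real_normed_vector, complete_space}"
  assumes fejer: "fejer_monotone x Z" and "closed Z" "Z \<noteq> {}" "0 < p" "0 < Q" "Q < 1"
    and contraction: "\<And>n. infdist (x (n + p)) Z \<le> Q * infdist (x n) Z"
  shows "\<exists>z\<in>Z. converges_linearly x z"
proof -
  have antimono: "infdist (x (Suc n)) Z \<le> infdist (x n) Z" for n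
    by (rule fejer_infdist_antimono[OF fejer \<open>Z \<noteq> {}\<close>]) simp
  obtain C q where "0 \<le> C" "0 \<le> q" "q < 1" "\<And>n. infdist (x n) Z \<le> C * q ^ n"
    using periodic_contraction_geometric[of "\<lambda>n. infdist (x n) Z", OF infdist_nonneg antimono
        assms(4-6) contraction] by blast
  then show ?thesis using fejer_linear_convergence[OF fejer \<open>closed Z\<close> \<open>Z \<noteq> {}\<close>] by blast
qed

section \<open>The weighted iteration of averaged operators\<close>

text \<open>The hypotheses of the main theorem, except those implied by the others
  (nonemptiness of Z follows from regularity of the family, the upper bound on the
  weights from their nonnegativity and normalization).\<close>
locale averaged_iteration =
  fixes I :: "'i set"
    and T :: "'i \<Rightarrow> 'a::{real_inner, complete_space} \<Rightarrow> 'a"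
    and \<omega> :: "'i \<Rightarrow> nat \<Rightarrow> real"
    and p :: nat
    and x :: "nat \<Rightarrow> 'a"
  assumes fin: "finite I"
    and avg: "\<forall>i\<in>I. averaged_nonexpansive (T i)"
    and blr: "\<forall>i\<in>I. bdd_lin_reg_op (T i)"
    and fam: "bdd_lin_reg_family I (\<lambda>i. Fix (T i))"
    and w_nonneg: "\<forall>i\<in>I. \<forall>n. 0 \<le> \<omega> i n"
    and w_sum: "\<forall>n. (\<Sum>i\<in>I. \<omega> i n) = 1"
    and w_plus: "(INF n. Min {\<omega> i n | i. i \<in> I \<and> \<omega> i n > 0}) > 0"
    and p_pos: "p \<ge> 1"
    and cover: "\<forall>n. (\<Union>k\<in>{n..<n+p}. {i\<in>I. \<omega> i k > 0}) = I"
    and iter: "\<forall>n. x (Suc n) = (\<Sum>i\<in>I. \<omega> i n *\<^sub>R T i (x n))"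
begin

abbreviation Z :: "'a set" where
  "Z \<equiv> \<Inter>i\<in>I. Fix (T i)"

abbreviation \<omega>_plus :: real where
  "\<omega>_plus \<equiv> INF n. Min {\<omega> i n | i. i \<in> I \<and> \<omega> i n > 0}"

lemma Z_closed: "closed Z"
  using fam unfolding bdd_lin_reg_family_def by auto

lemma Z_nonempty: "Z \<noteq> {}"
  using fam unfolding bdd_lin_reg_family_def by blast

lemma weight_nonneg: "i \<in> I \<Longrightarrow> 0 \<le> \<omega> i n"
  using w_nonneg by blast

lemma weight_lower_bound:
  assumes "i \<in> I" "0 < \<omega> i n"
  shows "\<omega>_plus \<le> \<omega> i n"
proof -
  define S where "S m = {\<omega> i m | i. i \<in> I \<and> \<omega> i m > 0}" for m
  have S_finite: "finite (S m)" for m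
    using fin by (rule finite_subset[rotated, OF finite_imageI]) (auto simp: S_def)
  have S_nonempty: "S m \<noteq> {}" for m
  proof
    assume "S m = {}"
    then have "(\<Sum>i\<in>I. \<omega> i m) \<le> 0" by (intro sum_nonpos) (auto simp: S_def not_less)
    with w_sum show False by simp
  qed
  have "0 \<le> Min (S m)" for m
    using S_finite S_nonempty by (auto simp: S_def)
  then have "bdd_below (range (\<lambda>m. Min (S m)))" by (intro bdd_belowI2)
  then have "(INF m. Min (S m)) \<le> Min (S n)" by (rule cINF_lower) simp
  also have "Min (S n) \<le> \<omega> i n" using S_finite assms by (intro Min_le) (auto simp: S_def)
  finally show ?thesis unfolding S_def .
qed

definition \<sigma> :: real where
  "\<sigma> = (SOME c. 0 < c \<and> (\<forall>i\<in>I. strongly_quasi_nonexpansive c (T i)))"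

lemma \<sigma>_pos: "0 < \<sigma>" and \<sigma>_sqne: "i \<in> I \<Longrightarrow> strongly_quasi_nonexpansive \<sigma> (T i)"
proof -
  have "\<exists>c. 0 < c \<and> (\<forall>i\<in>I. strongly_quasi_nonexpansive c (T i))"
    using common_strong_quasi_nonexpansiveness[OF fin] avg averaged_imp_strongly_quasi_nonexpansive
    by blast
  from someI_ex[OF this] show "0 < \<sigma>" "i \<in> I \<Longrightarrow> strongly_quasi_nonexpansive \<sigma> (T i)"
    unfolding \<sigma>_def by auto
qed

definition residual :: "nat \<Rightarrow> real" where
  "residual n = (\<Sum>i\<in>I. \<omega> i n * (norm (x n - T i (x n)))^2)"

lemma residual_nonneg: "0 \<le> residual n"
  unfolding residual_def using weight_nonneg by (intro sum_nonneg) auto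

lemma fejer_step:
  assumes "z \<in> Z"
  shows "(norm (x (Suc n) - z))^2 + \<sigma> * residual n \<le> (norm (x n - z))^2"
  unfolding residual_def iter[rule_format]
  by (rule strongly_quasi_nonexpansive_convex_combination[OF fin weight_nonneg w_sum[rule_format]
        \<sigma>_sqne assms])

lemma fejer_window:
  assumes "z \<in> Z"
  shows "(norm (x (n + m) - z))^2 + \<sigma> * (\<Sum>k\<in>{n..<n+m}. residual k) \<le> (norm (x n - z))^2"
proof (induction m)
  case (Suc m)
  have "(norm (x (n + Suc m) - z))^2 + \<sigma> * (\<Sum>k\<in>{n..<n + Suc m}. residual k)
      = (norm (x (Suc (n + m)) - z))^2 + \<sigma> * residual (n + m) + \<sigma> * (\<Sum>k\<in>{n..<n+m}. residual k)"
    by (simp add: algebra_simps)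
  also have "\<dots> \<le> (norm (x (n + m) - z))^2 + \<sigma> * (\<Sum>k\<in>{n..<n+m}. residual k)"
    using fejer_step[OF assms, of "n + m"] by simp
  finally show ?case using Suc by simp
qed simp

lemma fejer: "fejer_monotone x Z"
  unfolding fejer_monotone_def dist_norm
proof (intro ballI allI)
  fix z n assume "z \<in> Z"
  have "0 \<le> \<sigma> * residual n" using \<sigma>_pos residual_nonneg[of n] by simp
  then have "(norm (x (Suc n) - z))^2 \<le> (norm (x n - z))^2"
    using fejer_step[OF \<open>z \<in> Z\<close>, of n] by linarith
  then show "norm (x (Suc n) - z) \<le> norm (x n - z)" by (rule power2_le_imp_le) simp
qed

lemma step_le_residual: "norm (x (Suc n) - x n) \<le> sqrt (residual n)"
  unfolding residual_def iter[rule_format]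
  by (rule real_le_rsqrt, rule convex_combination_step_le[OF fin weight_nonneg w_sum[rule_format]])

text \<open>Fejer monotonicity keeps the orbit bounded.\<close>
lemma bounded_iterates: "\<exists>\<rho>>0. \<forall>n. norm (x n) \<le> \<rho>"
proof -
  obtain z where "z \<in> Z" using Z_nonempty by blast
  define \<rho> where "\<rho> = norm (x 0 - z) + norm z + 1"
  have "norm (x n) \<le> \<rho>" for n
  proof -
    have "norm (x n) \<le> norm z + norm (x n - z)" by (rule norm_triangle_sub)
    also have "norm (x n - z) \<le> norm (x 0 - z)"
      using fejer_monotoneD[OF fejer \<open>z \<in> Z\<close>, of 0 n] by (simp add: dist_norm)
    finally show ?thesis unfolding \<rho>_def by simp
  qed
  moreover have "0 < \<rho>"
    unfolding \<rho>_def using norm_ge_zero[of "x 0 - z"] norm_ge_zero[of z] by linarith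
  ultimately show ?thesis by blast
qed

text \<open>Since the orbit is bounded, bounded linear regularity of the operators gives
  one constant controlling the distance of every iterate to every Fix (T i).\<close>
lemma regularity_on_orbit:
  "\<exists>K\<ge>0. \<forall>i\<in>I. \<forall>n. infdist (x n) (Fix (T i)) \<le> K * norm (x n - T i (x n))"
proof -
  obtain \<rho> where \<rho>: "\<rho> > 0" "\<And>n. norm (x n) \<le> \<rho>" using bounded_iterates by blast
  have "\<forall>i\<in>I. \<exists>\<kappa>\<ge>0. \<forall>y. norm y \<le> \<rho> \<longrightarrow> infdist y (Fix (T i)) \<le> \<kappa> * norm (y - T i y)"
    using blr \<rho>(1) unfolding bdd_lin_reg_op_def by blast
  then obtain \<kappa> where \<kappa>: "\<And>i. i \<in> I \<Longrightarrow> 0 \<le> \<kappa> i"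
    "\<And>i y. i \<in> I \<Longrightarrow> norm y \<le> \<rho> \<Longrightarrow> infdist y (Fix (T i)) \<le> \<kappa> i * norm (y - T i y)"
    by metis
  define K where "K = (\<Sum>i\<in>I. \<kappa> i)"
  have "\<kappa> i \<le> K" if "i \<in> I" for i
    unfolding K_def using \<kappa>(1) fin that by (intro member_le_sum) auto
  then have "infdist (x n) (Fix (T i)) \<le> K * norm (x n - T i (x n))" if "i \<in> I" for i n
    using \<kappa>(2)[OF that \<rho>(2)] that by (meson mult_right_mono norm_ge_zero order_trans)
  moreover have "0 \<le> K" unfolding K_def using \<kappa>(1) by (simp add: sum_nonneg)
  ultimately show ?thesis by blast
qed

definition window :: "nat \<Rightarrow> real" where
  "window n = (\<Sum>k\<in>{n..<n+p}. residual k)"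

lemma window_nonneg: "0 \<le> window n"
  unfolding window_def using residual_nonneg by (simp add: sum_nonneg)

lemma residual_le_window: "k \<in> {n..<n+p} \<Longrightarrow> residual k \<le> window n"
  unfolding window_def using residual_nonneg by (intro member_le_sum) auto

lemma drift_in_window:
  assumes "j \<le> p"
  shows "norm (x (n + j) - x n) \<le> real j * sqrt (window n)"
  using assms
proof (induction j)
  case (Suc j)
  have "n + j \<in> {n..<n+p}" using Suc.prems by simp
  then have step: "norm (x (Suc (n + j)) - x (n + j)) \<le> sqrt (window n)"
    using step_le_residual[of "n + j"] residual_le_window[of "n + j" n]
    by (meson order_trans real_sqrt_le_iff)
  have "norm (x (n + Suc j) - x n) \<le> norm (x (Suc (n + j)) - x (n + j)) + norm (x (n + j) - x n)"
    using norm_triangle_ineq[of "x (Suc (n + j)) - x (n + j)" "x (n + j) - x n"] by simp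
  also have "\<dots> \<le> sqrt (window n) + real j * sqrt (window n)"
    using step Suc by simp
  finally show ?case by (simp add: algebra_simps)
qed simp

text \<open>By the covering condition every operator is active somewhere in each window, and
  there its displacement is controlled by the window residual.\<close>
lemma displacement_in_window:
  assumes "i \<in> I"
  obtains k where "k \<in> {n..<n+p}" "norm (x k - T i (x k)) \<le> sqrt (window n / \<omega>_plus)"
proof -
  have "i \<in> (\<Union>k\<in>{n..<n+p}. {i\<in>I. \<omega> i k > 0})" using cover assms by simp
  then obtain k where k: "k \<in> {n..<n+p}" "0 < \<omega> i k" by blast
  have "\<omega>_plus * (norm (x k - T i (x k)))^2 \<le> \<omega> i k * (norm (x k - T i (x k)))^2"
    using weight_lower_bound[OF assms k(2)] by (intro mult_right_mono) auto
  also have "\<dots> \<le> residual k"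
    unfolding residual_def using fin assms weight_nonneg
    by (intro member_le_sum[where f = "\<lambda>i. \<omega> i k * (norm (x k - T i (x k)))^2"]) auto
  also have "\<dots> \<le> window n" using residual_le_window k(1) .
  finally have "(norm (x k - T i (x k)))^2 \<le> window n / \<omega>_plus"
    using w_plus by (simp add: field_simps)
  then show ?thesis using that k(1) real_le_rsqrt by blast
qed

text \<open>Each distance d(x n, Fix (T i)) is controlled by the residual of the window at n:
  move to the time k where T i is active, use regularity of T i there, and move back.\<close>
lemma distance_to_Fix_bound:
  "\<exists>M>0. \<forall>i\<in>I. \<forall>n. infdist (x n) (Fix (T i)) \<le> M * sqrt (window n)"
proof -
  obtain K where K: "0 \<le> K"
    "\<And>i n. i \<in> I \<Longrightarrow> infdist (x n) (Fix (T i)) \<le> K * norm (x n - T i (x n))"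
    using regularity_on_orbit by blast
  define M where "M = K / sqrt \<omega>_plus + real p"
  have "infdist (x n) (Fix (T i)) \<le> M * sqrt (window n)" if i: "i \<in> I" for i n
  proof -
    obtain k where k: "k \<in> {n..<n+p}" "norm (x k - T i (x k)) \<le> sqrt (window n / \<omega>_plus)"
      using displacement_in_window[OF i] by blast
    define j where "j = k - n"
    have j: "k = n + j" "j \<le> p" using k(1) by (auto simp: j_def)
    have "infdist (x n) (Fix (T i)) \<le> infdist (x k) (Fix (T i)) + dist (x n) (x k)"
      by (rule infdist_triangle)
    also have "infdist (x k) (Fix (T i)) \<le> K * (sqrt (window n) / sqrt \<omega>_plus)"
      using K(2)[OF i, of k] mult_left_mono[OF k(2) K(1)] by (simp add: real_sqrt_divide)
    also have "dist (x n) (x k) \<le> real j * sqrt (window n)"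
      using drift_in_window[OF j(2)] by (simp add: j dist_norm norm_minus_commute)
    also have "real j * sqrt (window n) \<le> real p * sqrt (window n)"
      using j(2) window_nonneg by (intro mult_right_mono) auto
    finally show ?thesis unfolding M_def by (simp add: algebra_simps)
  qed
  moreover have "0 < M" unfolding M_def using K(1) w_plus p_pos by (simp add: add_nonneg_pos)
  ultimately show ?thesis by blast
qed

text \<open>Key estimate: bounded linear regularity of the family turns the bound on the
  distances to the individual sets Fix (T i) into a bound on the distance to Z.\<close>
lemma distance_bound: "\<exists>\<gamma>>0. \<forall>n. (infdist (x n) Z)^2 \<le> \<gamma> * window n"
proof -
  obtain \<rho> where \<rho>: "\<rho> > 0" "\<And>n. norm (x n) \<le> \<rho>" using bounded_iterates by blast
  obtain \<mu> where \<mu>: "\<mu> > 0"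
    "\<And>y. norm y \<le> \<rho> \<Longrightarrow> infdist y Z \<le> \<mu> * (MAX i\<in>I. infdist y (Fix (T i)))"
    using fam \<rho>(1) unfolding bdd_lin_reg_family_def by blast
  obtain M where M: "M > 0"
    "\<And>i n. i \<in> I \<Longrightarrow> infdist (x n) (Fix (T i)) \<le> M * sqrt (window n)"
    using distance_to_Fix_bound by blast
  have I_nonempty: "I \<noteq> {}" using fam unfolding bdd_lin_reg_family_def by blast
  have "(infdist (x n) Z)^2 \<le> (\<mu> * M)^2 * window n" for n
  proof -
    have "(MAX i\<in>I. infdist (x n) (Fix (T i))) \<le> M * sqrt (window n)"
      using fin I_nonempty M(2) by simp
    then have "infdist (x n) Z \<le> \<mu> * (M * sqrt (window n))"
      using \<mu>(2)[OF \<rho>(2)] \<mu>(1) by (meson mult_left_mono less_imp_le order_trans)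
    then have "(infdist (x n) Z)^2 \<le> (\<mu> * (M * sqrt (window n)))^2"
      by (intro power_mono) (auto simp: infdist_nonneg)
    also have "\<dots> = (\<mu> * M)^2 * window n" using window_nonneg by (simp add: power_mult_distrib)
    finally show ?thesis .
  qed
  then show ?thesis using \<mu>(1) M(1) by (intro exI[of _ "(\<mu> * M)^2"]) auto
qed

text \<open>Combining the key estimate with the Fejer inequality over a window: the distance
  to Z contracts by a fixed factor Q < 1 every p steps.\<close>
lemma distance_contraction:
  "\<exists>Q. 0 < Q \<and> Q < 1 \<and> (\<forall>n. infdist (x (n + p)) Z \<le> Q * infdist (x n) Z)"
proof -
  obtain \<gamma> where \<gamma>: "\<gamma> > 0" "\<And>n. (infdist (x n) Z)^2 \<le> \<gamma> * window n"
    using distance_bound by blast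
  define \<beta> where "\<beta> = \<sigma> / \<gamma>"
  have \<beta>: "0 < \<beta>" using \<sigma>_pos \<gamma>(1) by (simp add: \<beta>_def)
  define Q where "Q = sqrt (max (1/2) (1 - \<beta>))"
  have "infdist (x (n + p)) Z \<le> Q * infdist (x n) Z" for n
  proof -
    have "(infdist (x (n + p)) Z)^2 + \<beta> * (infdist (x n) Z)^2 \<le> (infdist (x n) Z)^2"
    proof (rule infdist_sq_geI[OF Z_nonempty])
      show "0 \<le> (infdist (x (n + p)) Z)^2 + \<beta> * (infdist (x n) Z)^2" using \<beta> by simp
      fix z assume "z \<in> Z"
      have "(infdist (x (n + p)) Z)^2 \<le> (norm (x (n + p) - z))^2"
        using infdist_le[OF \<open>z \<in> Z\<close>, of "x (n + p)"]
        by (intro power_mono) (auto simp: dist_norm infdist_nonneg)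
      moreover have "\<beta> * (infdist (x n) Z)^2 \<le> \<beta> * (\<gamma> * window n)"
        using \<gamma>(2) \<beta> by (intro mult_left_mono) auto
      moreover have "\<beta> * (\<gamma> * window n) = \<sigma> * window n" using \<gamma>(1) by (simp add: \<beta>_def)
      moreover have "(norm (x (n + p) - z))^2 + \<sigma> * window n \<le> (norm (x n - z))^2"
        using fejer_window[OF \<open>z \<in> Z\<close>, of n p] by (simp add: window_def)
      ultimately show "(infdist (x (n + p)) Z)^2 + \<beta> * (infdist (x n) Z)^2 \<le> (dist (x n) z)^2"
        unfolding dist_norm by linarith
    qed
    then have "(infdist (x (n + p)) Z)^2 \<le> (1 - \<beta>) * (infdist (x n) Z)^2"
      by (simp add: algebra_simps)
    also have "\<dots> \<le> max (1/2) (1 - \<beta>) * (infdist (x n) Z)^2" by (intro mult_right_mono) auto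
    also have "\<dots> = (Q * infdist (x n) Z)^2" unfolding Q_def by (simp add: power_mult_distrib)
    finally show ?thesis
      by (rule power2_le_imp_le) (simp add: Q_def infdist_nonneg)
  qed
  moreover have "0 < Q" "Q < 1" unfolding Q_def using \<beta> by auto
  ultimately show ?thesis by blast
qed

theorem linear_convergence: "\<exists>z\<in>Z. converges_linearly x z"
proof -
  obtain Q where "0 < Q" "Q < 1" "\<And>n. infdist (x (n + p)) Z \<le> Q * infdist (x n) Z"
    using distance_contraction by blast
  moreover have "0 < p" using p_pos by simp
  ultimately show ?thesis
    by (intro fejer_periodic_contraction_linear_convergence[OF fejer Z_closed Z_nonempty])
qed

end

theorem theorem6p1:
  fixes I :: "'i set"
    and T :: "'i \<Rightarrow> 'a::{real_inner, complete_space} \<Rightarrow> 'a"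
    and \<omega> :: "'i \<Rightarrow> nat \<Rightarrow> real"
    and p :: nat
    and x :: "nat \<Rightarrow> 'a"
  assumes fin: "finite I"
    and avg: "\<forall>i\<in>I. averaged_nonexpansive (T i)"
    and blr: "\<forall>i\<in>I. bdd_lin_reg_op (T i)"
    and Z_ne: "(\<Inter>i\<in>I. Fix (T i)) \<noteq> {}"
    and fam: "bdd_lin_reg_family I (\<lambda>i. Fix (T i))"
    and w_range: "\<forall>i\<in>I. \<forall>n. 0 \<le> \<omega> i n \<and> \<omega> i n \<le> 1"
    and w_sum: "\<forall>n. (\<Sum>i\<in>I. \<omega> i n) = 1"
    and w_plus: "(INF n. Min {\<omega> i n | i. i \<in> I \<and> \<omega> i n > 0}) > 0"
    and p_pos: "p \<ge> 1"
    and cover: "\<forall>n. (\<Union>k\<in>{n..<n+p}. {i\<in>I. \<omega> i k > 0}) = I"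
    and iter: "\<forall>n. x (Suc n) = (\<Sum>i\<in>I. \<omega> i n *\<^sub>R T i (x n))"
  shows "\<exists>z\<in>(\<Inter>i\<in>I. Fix (T i)). converges_linearly x z"
proof -
  interpret averaged_iteration I T \<omega> p x
    by unfold_locales (use fin avg blr fam w_range w_sum w_plus p_pos cover iter in auto)
  show ?thesis by (rule linear_convergence)
qed

end
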